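(* Let $\alpha,\beta,\delta>0$, $\pi_g\in(0,1)$ and $\Delta_g=1/\pi_g-1$. Let $g:\mathbb{R}_+\to\mathbb{R}_+$ be differentiable and strictly increasing with $g(0)=1$ and $g'>0$. For a job $j$ with task intensities $a_j,p_j,r_j\ge 0$ and contact intensity $k_j\ge 0$, define \[ B_j(k_j)=1+(\alpha a_j+\beta p_j)\,g(k_j),\qquad P_j=1+\delta r_j,\qquad U_j=1/P_j,\qquad E_j^\ast=\frac{B_j}{B_j+P_j}. \] For $h\in\{M,g\}$ define \[ V_{hj}=(E_j^\ast)^2\tau^2_{hj}+(1-E_j^\ast)^2U_j, \] where $\tau^2_{Mj}=B_j$ and $\tau^2_{gj}=B_j/\pi_g$. Then: (i) If $a_j=p_j=0$ (a purely routine job), then $V_{Mj}$, $V_{gj}$ and the variance gap $V_{gj}-V_{Mj}$ do not depend on $k_j$. Hence the callback probabilities \[ c_{hj}=1-\Phi\!\left(\bar\theta\sqrt{1+V_{hj}}\right),\qquad \bar\theta>0, \] and the callback gap $c_{Mj}-c_{gj}$ also do not depend on $k_j$. (ii) If $a_j+p_j>0$, then $E_j^\ast$ and the variance gap \[ V_{gj}-V_{Mj}=\Delta_g\,\frac{B_j^3}{(B_j+P_j)^2} \] are strictly increasing in $k_j$. (iii) The cross-partials satisfy \[ \frac{\partial^2 B_j}{\partial k_j\,\partial a_j}=\alpha g'(k_j)>0,\qquad \frac{\partial^2 B_j}{\partial k_j\,\partial p_j}=\beta g'(k_j)>0. \]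
   Context: The setting is an information-based model of hiring. Productivity is $\theta\sim N(0,1)$ for both groups. For a group-$h$ applicant to job $j$ there are two signals: a subjective signal $s^s=\theta+\varepsilon^s$ with $\varepsilon^s\sim N(0,\tau^2_{hj})$, and an objective signal $s^o=\theta+\varepsilon^o$ with $\varepsilon^o\sim N(0,U_j)$. These are independent given $\theta$. The employer forms the composite $E_j^\ast s^s+(1-E_j^\ast)s^o$, and $V_{hj}$ is its noise variance. The callback probability is that of calling back when the posterior mean of $\theta$ given the composite exceeds $\bar\theta$. $\Phi$ is the standard normal cumulative distribution function. Group $M$ is the majority group and group $g$ is a minority group. *)

theory Defs
  imports "HOL-Probability.Probability"
begin

definition Phi :: "real \<Rightarrow> real" where
  "Phi x = measure (density lborel std_normal_density) {..x}"

definition Bj :: "real \<Rightarrow> real \<Rightarrow> (real \<Rightarrow> real) \<Rightarrow> real \<Rightarrow> real \<Rightarrow> real \<Rightarrow> real" where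
  "Bj alpha beta g a p k = 1 + (alpha * a + beta * p) * g k"

definition Pj :: "real \<Rightarrow> real \<Rightarrow> real" where
  "Pj delta r = 1 + delta * r"

definition Uj :: "real \<Rightarrow> real \<Rightarrow> real" where
  "Uj delta r = 1 / Pj delta r"

definition Estar :: "real \<Rightarrow> real \<Rightarrow> real \<Rightarrow> (real \<Rightarrow> real) \<Rightarrow> real \<Rightarrow> real \<Rightarrow> real \<Rightarrow> real \<Rightarrow> real" where
  "Estar alpha beta delta g a p r k =
     Bj alpha beta g a p k / (Bj alpha beta g a p k + Pj delta r)"

definition Vj :: "real \<Rightarrow> real \<Rightarrow> real \<Rightarrow> (real \<Rightarrow> real) \<Rightarrow> real \<Rightarrow> real \<Rightarrow> real \<Rightarrow> real \<Rightarrow> real \<Rightarrow> real" where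
  "Vj alpha beta delta g tau2 a p r k =
     (Estar alpha beta delta g a p r k)\<^sup>2 * tau2
     + (1 - Estar alpha beta delta g a p r k)\<^sup>2 * Uj delta r"

definition VM :: "real \<Rightarrow> real \<Rightarrow> real \<Rightarrow> (real \<Rightarrow> real) \<Rightarrow> real \<Rightarrow> real \<Rightarrow> real \<Rightarrow> real \<Rightarrow> real" where
  "VM alpha beta delta g a p r k =
     Vj alpha beta delta g (Bj alpha beta g a p k) a p r k"

definition Vg :: "real \<Rightarrow> real \<Rightarrow> real \<Rightarrow> real \<Rightarrow> (real \<Rightarrow> real) \<Rightarrow> real \<Rightarrow> real \<Rightarrow> real \<Rightarrow> real \<Rightarrow> real" where
  "Vg alpha beta delta pig g a p r k =
     Vj alpha beta delta g (Bj alpha beta g a p k / pig) a p r k"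

definition callback :: "real \<Rightarrow> real \<Rightarrow> real" where
  "callback thetabar V = 1 - Phi (thetabar * sqrt (1 + V))"

end

theory Submission
  imports Defs
begin

text \<open>Only the weight \<open>B\<^sub>j\<close> of the subjective signal depends on \<open>k\<^sub>j\<close>, and only through
  \<open>(\<alpha> a\<^sub>j + \<beta> p\<^sub>j) g(k\<^sub>j)\<close>; so a routine job sees no effect of \<open>k\<^sub>j\<close> at all, while for
  other jobs \<open>B\<^sub>j\<close> is strictly increasing in \<open>k\<^sub>j\<close>. Since the two groups differ only in
  the subjective noise, the variance gap is \<open>(E\<^sub>j\<^sup>*)\<^sup>2 (\<tau>\<^sup>2\<^sub>g\<^sub>j - \<tau>\<^sup>2\<^sub>M\<^sub>j) = \<Delta>\<^sub>g B\<^sup>3/(B+P)\<^sup>2\<close>,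
  and both \<open>B/(B+P)\<close> and \<open>B\<^sup>3/(B+P)\<^sup>2 = (B/(B+P))\<^sup>2 B\<close> increase with \<open>B \<ge> 0\<close>.\<close>

lemma ratio_strict_mono:
  fixes x y P :: real
  assumes "0 \<le> x" "x < y" "0 < P"
  shows "x / (x + P) < y / (y + P)"
proof -
  have "x * (y + P) < y * (x + P)" using assms by (simp add: algebra_simps)
  then show ?thesis using assms by (simp add: divide_simps)
qed

lemma cube_ratio_strict_mono:
  fixes x y P :: real
  assumes "0 \<le> x" "x < y" "0 < P"
  shows "x ^ 3 / (x + P)\<^sup>2 < y ^ 3 / (y + P)\<^sup>2"
proof -
  have "(x / (x + P))\<^sup>2 < (y / (y + P))\<^sup>2"
    using ratio_strict_mono[OF assms] assms by (intro power_strict_mono) auto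
  then have "(x / (x + P))\<^sup>2 * x < (y / (y + P))\<^sup>2 * y"
    using assms by (intro mult_strict_mono') auto
  then show ?thesis by (simp add: power2_eq_square power3_eq_cube)
qed

lemma Bj_routine [simp]: "Bj alpha beta g 0 0 k = 1"
  by (simp add: Bj_def)

lemma Bj_pos:
  assumes "0 \<le> alpha * a + beta * p" "0 \<le> g k"
  shows "0 < Bj alpha beta g a p k"
  using assms by (simp add: Bj_def add_pos_nonneg)

lemma Bj_strict_mono_on:
  assumes "0 < alpha * a + beta * p" "strict_mono_on S g"
  shows "strict_mono_on S (Bj alpha beta g a p)"
  using assms by (auto simp: strict_mono_on_def Bj_def)

lemma Pj_pos: "0 < delta \<Longrightarrow> 0 \<le> r \<Longrightarrow> 0 < Pj delta r"
  by (simp add: Pj_def add_pos_nonneg)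

lemma Bj_has_real_derivative:
  assumes "(g has_real_derivative g') (at k within S)"
  shows "(Bj alpha beta g a p has_real_derivative (alpha * a + beta * p) * g') (at k within S)"
  unfolding Bj_def by (auto intro!: derivative_eq_intros assms)

lemma has_real_derivative_linear_weight:
  "((\<lambda>x. (alpha * x + c) * d) has_real_derivative alpha * d) (at x)"
  "((\<lambda>x. (c + beta * x) * d) has_real_derivative beta * d) (at x)"
  by (auto intro!: derivative_eq_intros)

lemma VM_routine:
  "VM alpha beta delta g 0 0 r k = (1 / (1 + Pj delta r))\<^sup>2 + (1 - 1 / (1 + Pj delta r))\<^sup>2 * Uj delta r"
  by (simp add: VM_def Vj_def Estar_def)

lemma Vg_routine:
  "Vg alpha beta delta pig g 0 0 r k
     = (1 / (1 + Pj delta r))\<^sup>2 / pig + (1 - 1 / (1 + Pj delta r))\<^sup>2 * Uj delta r"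
  by (simp add: Vg_def Vj_def Estar_def)

lemma Vg_minus_VM:
  "Vg alpha beta delta pig g a p r k - VM alpha beta delta g a p r k
     = (1 / pig - 1) * (Bj alpha beta g a p k) ^ 3 / (Bj alpha beta g a p k + Pj delta r)\<^sup>2"
proof -
  have "Vg alpha beta delta pig g a p r k - VM alpha beta delta g a p r k
      = (Estar alpha beta delta g a p r k)\<^sup>2 * (Bj alpha beta g a p k / pig - Bj alpha beta g a p k)"
    unfolding Vg_def VM_def Vj_def by (simp add: algebra_simps)
  then show ?thesis
    unfolding Estar_def by (simp add: power_divide power2_eq_square power3_eq_cube algebra_simps)
qed

context
  fixes alpha beta delta a p r :: real and g :: "real \<Rightarrow> real"
  assumes weight_pos: "0 < alpha * a + beta * p"
    and g_nonneg: "\<forall>k\<ge>0. g k \<ge> 0"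
    and g_mono: "strict_mono_on {0..} g"
    and P_pos: "0 < Pj delta r"
begin

private lemma Bj_strict_mono_nonneg:
  assumes "0 \<le> x" "x < y"
  shows "0 \<le> Bj alpha beta g a p x" "Bj alpha beta g a p x < Bj alpha beta g a p y"
  using Bj_pos[of alpha a beta p g x] Bj_strict_mono_on[OF weight_pos g_mono] weight_pos
    g_nonneg assms by (auto simp: strict_mono_on_def)

lemma Estar_strict_mono_on: "strict_mono_on {0..} (Estar alpha beta delta g a p r)"
  by (rule strict_mono_onI)
    (auto simp: Estar_def intro!: ratio_strict_mono P_pos Bj_strict_mono_nonneg)

lemma variance_gap_strict_mono_on:
  assumes "0 < pig" "pig < 1"
  shows "strict_mono_on {0..}
    (\<lambda>k. Vg alpha beta delta pig g a p r k - VM alpha beta delta g a p r k)"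
proof (rule strict_mono_onI)
  fix x y :: real
  assume "x \<in> {0..}" "y \<in> {0..}" "x < y"
  then have "(Bj alpha beta g a p x) ^ 3 / (Bj alpha beta g a p x + Pj delta r)\<^sup>2
      < (Bj alpha beta g a p y) ^ 3 / (Bj alpha beta g a p y + Pj delta r)\<^sup>2"
    by (auto intro!: cube_ratio_strict_mono P_pos Bj_strict_mono_nonneg)
  moreover have "0 < 1 / pig - 1" using assms by simp
  ultimately show "Vg alpha beta delta pig g a p r x - VM alpha beta delta g a p r x
      < Vg alpha beta delta pig g a p r y - VM alpha beta delta g a p r y"
    unfolding Vg_minus_VM times_divide_eq_right[symmetric] by (rule mult_strict_left_mono)
qed

end

theorem proposition2:
  fixes alpha beta delta pig :: real
    and g g' :: "real \<Rightarrow> real"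
  assumes alpha: "alpha > 0" and beta: "beta > 0" and delta: "delta > 0"
    and pig: "0 < pig" "pig < 1"
    and g_nonneg: "\<forall>k\<ge>0. g k \<ge> 0"
    and g_deriv: "\<forall>k\<ge>0. (g has_real_derivative g' k) (at k within {0..})"
    and g_mono: "strict_mono_on {0..} g"
    and g0: "g 0 = 1"
    and g'_pos: "\<forall>k\<ge>0. g' k > 0"
  shows
    \<comment> \<open>(i) purely routine job: no dependence on k\<close>
    "(\<forall>r thetabar k1 k2. r \<ge> 0 \<and> thetabar > 0 \<and> k1 \<ge> 0 \<and> k2 \<ge> 0 \<longrightarrow>
        VM alpha beta delta g 0 0 r k1 = VM alpha beta delta g 0 0 r k2
      \<and> Vg alpha beta delta pig g 0 0 r k1 = Vg alpha beta delta pig g 0 0 r k2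
      \<and> Vg alpha beta delta pig g 0 0 r k1 - VM alpha beta delta g 0 0 r k1
        = Vg alpha beta delta pig g 0 0 r k2 - VM alpha beta delta g 0 0 r k2
      \<and> callback thetabar (VM alpha beta delta g 0 0 r k1)
        = callback thetabar (VM alpha beta delta g 0 0 r k2)
      \<and> callback thetabar (Vg alpha beta delta pig g 0 0 r k1)
        = callback thetabar (Vg alpha beta delta pig g 0 0 r k2)
      \<and> callback thetabar (VM alpha beta delta g 0 0 r k1)
          - callback thetabar (Vg alpha beta delta pig g 0 0 r k1)
        = callback thetabar (VM alpha beta delta g 0 0 r k2)
          - callback thetabar (Vg alpha beta delta pig g 0 0 r k2))
    \<and>
    \<comment> \<open>(ii) non-routine job: E* and the variance gap strictly increase in k\<close>
    (\<forall>a p r. a \<ge> 0 \<and> p \<ge> 0 \<and> r \<ge> 0 \<and> a + p > 0 \<longrightarrow>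
        (\<forall>k\<ge>0. Vg alpha beta delta pig g a p r k - VM alpha beta delta g a p r k
           = (1 / pig - 1) * (Bj alpha beta g a p k) ^ 3
               / (Bj alpha beta g a p k + Pj delta r)\<^sup>2)
      \<and> strict_mono_on {0..} (\<lambda>k. Estar alpha beta delta g a p r k)
      \<and> strict_mono_on {0..}
          (\<lambda>k. Vg alpha beta delta pig g a p r k - VM alpha beta delta g a p r k))
    \<and>
    \<comment> \<open>(iii) cross-partials of B with respect to (k,a) and (k,p)\<close>
    (\<forall>a p k. a \<ge> 0 \<and> p \<ge> 0 \<and> k \<ge> 0 \<longrightarrow>
        (\<forall>a' p'. ((\<lambda>k'. Bj alpha beta g a' p' k') has_real_derivative
                    (alpha * a' + beta * p') * g' k) (at k within {0..}))
      \<and> ((\<lambda>a'. (alpha * a' + beta * p) * g' k) has_real_derivative alpha * g' k) (at a)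
      \<and> ((\<lambda>p'. (alpha * a + beta * p') * g' k) has_real_derivative beta * g' k) (at p)
      \<and> alpha * g' k > 0 \<and> beta * g' k > 0)"
proof -
  have weights_pos: "0 < alpha * a + beta * p" "0 < Pj delta r"
    if "0 \<le> a" "0 \<le> p" "0 \<le> r" "0 < a + p" for a p r
    using that alpha beta delta Pj_pos
    by (cases "0 < a"; force intro: add_pos_nonneg add_nonneg_pos)+
  have "strict_mono_on {0..} (Estar alpha beta delta g a p r)"
    "strict_mono_on {0..} (\<lambda>k. Vg alpha beta delta pig g a p r k - VM alpha beta delta g a p r k)"
    if "0 \<le> a" "0 \<le> p" "0 \<le> r" "0 < a + p" for a p r
    using weights_pos[OF that] g_nonneg g_mono pig
    by (simp_all add: Estar_strict_mono_on variance_gap_strict_mono_on)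
  then show ?thesis
    using g_deriv g'_pos alpha beta
    by (simp add: VM_routine Vg_routine Vg_minus_VM Bj_has_real_derivative
        has_real_derivative_linear_weight)
qed

end
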